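(* Assume each $f_j:\mathbb R^n\to\mathbb R$ ($1\le j\le m$) is continuously differentiable with $L_j$-Lipschitz gradient and $\mu_j$-strongly convex ($0\le\mu_j\le L_j<\infty$), and let $\mu=\min_j\mu_j$. Let $\gamma_0>0$, $x_0,x_1\in\mathbb R^n$, $\gamma(t)=\mu+(\gamma_0-\mu)e^{-t}$, and let $X,Z:[0,\infty)\to\mathbb R^n$ be locally absolutely continuous with $X(0)=x_0$, $Z(0)=x_0+x_1$, satisfying for almost every $t>0$ $$X'(t)=Z(t)-X(t),\qquad \gamma(t)Z'(t)\in\mu\big(X(t)-Z(t)\big)-\operatorname*{argmin}_{v\in C(X(t))}\langle X(t)-Z(t),v\rangle.$$ Then for every $1\le j\le m$ and all $t>0$, $$f_j(X(t))+\frac{\gamma(t)}{2}\|X'(t)\|^2+\frac12\int_0^t(\mu+3\gamma(s))\|X'(s)\|^2\,ds\le f_j(x_0)+\frac{\gamma_0}{2}\|x_1\|^2.$$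
   Context: $C(x)=\mathrm{conv}\{\nabla f_1(x),\dots,\nabla f_m(x)\}$. A function $g$ is $\mu_j$-strongly convex if $g(z)\ge g(y)+\langle\nabla g(y),z-y\rangle+\frac{\mu_j}{2}\|z-y\|^2$ for all $y,z$. Here $X'=Z-X$ is locally absolutely continuous, so $X''$ exists almost everywhere, and $X'(t)$ is understood as $Z(t)-X(t)$ for all $t$. *)

theory Defs
  imports "HOL-Analysis.Analysis"
begin

definition abs_continuous_on :: "real set \<Rightarrow> (real \<Rightarrow> 'a::real_normed_vector) \<Rightarrow> bool" where
  "abs_continuous_on S f \<longleftrightarrow>
     (\<forall>\<epsilon>>0. \<exists>\<delta>>0. \<forall>(I::nat set) a b.
        finite I \<longrightarrow>
        (\<forall>k\<in>I. a k \<le> b k \<and> {a k..b k} \<subseteq> S) \<longrightarrow>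
        (\<forall>k\<in>I. \<forall>l\<in>I. k \<noteq> l \<longrightarrow> {a k<..<b k} \<inter> {a l<..<b l} = {}) \<longrightarrow>
        (\<Sum>k\<in>I. b k - a k) < \<delta> \<longrightarrow>
        (\<Sum>k\<in>I. norm (f (b k) - f (a k))) < \<epsilon>)"

definition loc_abs_continuous_nonneg :: "(real \<Rightarrow> 'a::real_normed_vector) \<Rightarrow> bool" where
  "loc_abs_continuous_nonneg f \<longleftrightarrow> (\<forall>T\<ge>0. abs_continuous_on {0..T} f)"

definition strongly_convex_grad :: "real \<Rightarrow> ('a::real_inner \<Rightarrow> real) \<Rightarrow> ('a \<Rightarrow> 'a) \<Rightarrow> bool" where
  "strongly_convex_grad \<mu> g dg \<longleftrightarrow>
     (\<forall>y z. g z \<ge> g y + dg y \<bullet> (z - y) + \<mu> / 2 * (norm (z - y))\<^sup>2)"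

definition argmin_inner :: "'a::real_inner \<Rightarrow> 'a set \<Rightarrow> 'a set" where
  "argmin_inner w C = {v\<in>C. \<forall>u\<in>C. w \<bullet> v \<le> w \<bullet> u}"

end

theory Submission
  imports Defs
begin

text \<open>Along the flow, \<open>E(s) = f\<^sub>j(X s) + \<gamma>(s)/2 |X'(s)|\<^sup>2 + 1/2 \<integral>\<^sub>0\<^sup>s (\<mu> + 3\<gamma>) |X'|\<^sup>2\<close>
  is a Lyapunov function. Since \<open>\<gamma>' = \<mu> - \<gamma>\<close>, the differential inclusion gives
  \<open>E' = \<langle>X', \<nabla>f\<^sub>j(X) - v\<rangle>\<close> almost everywhere, where \<open>v\<close> is the minimiser of
  \<open>\<langle>X - Z, \<cdot>\<rangle>\<close> over \<open>C(X)\<close> selected by the flow; as \<open>\<nabla>f\<^sub>j(X) \<in> C(X)\<close> and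
  \<open>X' = -(X - Z)\<close>, this is \<open>\<le> 0\<close>. The function \<open>E\<close> is absolutely continuous, and an absolutely
  continuous function whose derivative is almost everywhere nonpositive is nonincreasing, so
  \<open>E(t) \<le> E(0)\<close>.\<close>

section \<open>Absolute continuity\<close>

lemma abs_continuous_onE:
  fixes g :: "real \<Rightarrow> 'a::real_normed_vector"
  assumes "abs_continuous_on S g" "\<epsilon> > 0"
  obtains \<delta> where "\<delta> > 0"
    "\<And>(P::'i set) lo hi. finite P \<Longrightarrow> (\<And>k. k \<in> P \<Longrightarrow> lo k \<le> hi k \<and> {lo k..hi k} \<subseteq> S) \<Longrightarrow>
       (\<And>k l. k \<in> P \<Longrightarrow> l \<in> P \<Longrightarrow> k \<noteq> l \<Longrightarrow> {lo k<..<hi k} \<inter> {lo l<..<hi l} = {}) \<Longrightarrow>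
       (\<Sum>k\<in>P. hi k - lo k) < \<delta> \<Longrightarrow> (\<Sum>k\<in>P. norm (g (hi k) - g (lo k))) < \<epsilon>"
proof -
  obtain \<delta> where "\<delta> > 0" and \<delta>: "\<forall>(I::nat set) a b. finite I \<longrightarrow>
        (\<forall>k\<in>I. a k \<le> b k \<and> {a k..b k} \<subseteq> S) \<longrightarrow>
        (\<forall>k\<in>I. \<forall>l\<in>I. k \<noteq> l \<longrightarrow> {a k<..<b k} \<inter> {a l<..<b l} = {}) \<longrightarrow>
        (\<Sum>k\<in>I. b k - a k) < \<delta> \<longrightarrow> (\<Sum>k\<in>I. norm (g (b k) - g (a k))) < \<epsilon>"
    using assms unfolding abs_continuous_on_def by blast
  show thesis
  proof (rule that[OF \<open>\<delta> > 0\<close>])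
    fix P :: "'i set" and lo hi
    assume P: "finite P" "\<And>k. k \<in> P \<Longrightarrow> lo k \<le> hi k \<and> {lo k..hi k} \<subseteq> S"
      "\<And>k l. k \<in> P \<Longrightarrow> l \<in> P \<Longrightarrow> k \<noteq> l \<Longrightarrow> {lo k<..<hi k} \<inter> {lo l<..<hi l} = {}"
      "(\<Sum>k\<in>P. hi k - lo k) < \<delta>"
    obtain h where h: "bij_betw h {0..<card P} P"
      using ex_bij_betw_nat_finite[OF P(1)] by blast
    have "(\<Sum>k\<in>{0..<card P}. norm (g (hi (h k)) - g (lo (h k)))) < \<epsilon>"
    proof (rule \<delta>[rule_format (no_asm)])
      show "\<forall>k\<in>{0..<card P}. lo (h k) \<le> hi (h k) \<and> {lo (h k)..hi (h k)} \<subseteq> S"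
        using P(2) bij_betwE[OF h] by blast
      show "\<forall>k\<in>{0..<card P}. \<forall>l\<in>{0..<card P}. k \<noteq> l \<longrightarrow>
          {lo (h k)<..<hi (h k)} \<inter> {lo (h l)<..<hi (h l)} = {}"
        using P(3) bij_betwE[OF h] bij_betw_imp_inj_on[OF h] by (metis inj_on_def)
      show "(\<Sum>k\<in>{0..<card P}. hi (h k) - lo (h k)) < \<delta>"
        using P(4) sum.reindex_bij_betw[OF h, of "\<lambda>k. hi k - lo k"] by simp
    qed simp
    then show "(\<Sum>k\<in>P. norm (g (hi k) - g (lo k))) < \<epsilon>"
      using sum.reindex_bij_betw[OF h, of "\<lambda>k. norm (g (hi k) - g (lo k))"] by simp
  qed
qed

lemma abs_continuous_on_dominated:
  fixes f :: "real \<Rightarrow> 'a::real_normed_vector" and g :: "real \<Rightarrow> 'b::real_normed_vector"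
    and h :: "real \<Rightarrow> 'c::real_normed_vector"
  assumes f: "abs_continuous_on S f" and g: "abs_continuous_on S g" and "B \<ge> 0"
    and dom: "\<And>x y. x \<in> S \<Longrightarrow> y \<in> S \<Longrightarrow>
      norm (h y - h x) \<le> B * (norm (f y - f x) + norm (g y - g x))"
  shows "abs_continuous_on S h"
  unfolding abs_continuous_on_def
proof (intro allI impI)
  fix \<epsilon> :: real assume "\<epsilon> > 0"
  define \<eta> where "\<eta> = \<epsilon> / (B + 1) / 2"
  have "\<eta> > 0" using \<open>\<epsilon> > 0\<close> \<open>B \<ge> 0\<close> by (simp add: \<eta>_def)
  obtain \<delta>f where "\<delta>f > 0" and \<delta>f: "\<And>(P::nat set) lo hi. finite P \<Longrightarrow>
       (\<And>k. k \<in> P \<Longrightarrow> lo k \<le> hi k \<and> {lo k..hi k} \<subseteq> S) \<Longrightarrow>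
       (\<And>k l. k \<in> P \<Longrightarrow> l \<in> P \<Longrightarrow> k \<noteq> l \<Longrightarrow> {lo k<..<hi k} \<inter> {lo l<..<hi l} = {}) \<Longrightarrow>
       (\<Sum>k\<in>P. hi k - lo k) < \<delta>f \<Longrightarrow> (\<Sum>k\<in>P. norm (f (hi k) - f (lo k))) < \<eta>"
    by (rule abs_continuous_onE[where 'i=nat, OF f \<open>\<eta> > 0\<close>]) blast
  obtain \<delta>g where "\<delta>g > 0" and \<delta>g: "\<And>(P::nat set) lo hi. finite P \<Longrightarrow>
       (\<And>k. k \<in> P \<Longrightarrow> lo k \<le> hi k \<and> {lo k..hi k} \<subseteq> S) \<Longrightarrow>
       (\<And>k l. k \<in> P \<Longrightarrow> l \<in> P \<Longrightarrow> k \<noteq> l \<Longrightarrow> {lo k<..<hi k} \<inter> {lo l<..<hi l} = {}) \<Longrightarrow>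
       (\<Sum>k\<in>P. hi k - lo k) < \<delta>g \<Longrightarrow> (\<Sum>k\<in>P. norm (g (hi k) - g (lo k))) < \<eta>"
    by (rule abs_continuous_onE[where 'i=nat, OF g \<open>\<eta> > 0\<close>]) blast
  show "\<exists>\<delta>>0. \<forall>(I::nat set) a b. finite I \<longrightarrow> (\<forall>k\<in>I. a k \<le> b k \<and> {a k..b k} \<subseteq> S) \<longrightarrow>
        (\<forall>k\<in>I. \<forall>l\<in>I. k \<noteq> l \<longrightarrow> {a k<..<b k} \<inter> {a l<..<b l} = {}) \<longrightarrow>
        (\<Sum>k\<in>I. b k - a k) < \<delta> \<longrightarrow> (\<Sum>k\<in>I. norm (h (b k) - h (a k))) < \<epsilon>"
  proof (intro exI[of _ "min \<delta>f \<delta>g"] conjI allI impI)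
    fix I :: "nat set" and a b
    assume I: "finite I" "\<forall>k\<in>I. a k \<le> b k \<and> {a k..b k} \<subseteq> S"
      "\<forall>k\<in>I. \<forall>l\<in>I. k \<noteq> l \<longrightarrow> {a k<..<b k} \<inter> {a l<..<b l} = {}"
      "(\<Sum>k\<in>I. b k - a k) < min \<delta>f \<delta>g"
    have "(\<Sum>k\<in>I. norm (h (b k) - h (a k)))
        \<le> B * ((\<Sum>k\<in>I. norm (f (b k) - f (a k))) + (\<Sum>k\<in>I. norm (g (b k) - g (a k))))"
    proof -
      have "a k \<in> S" "b k \<in> S" if "k \<in> I" for k
        using I(2) that by (metis atLeastAtMost_iff order_refl subsetD)+
      then show ?thesis
        unfolding sum.distrib[symmetric] sum_distrib_left by (intro sum_mono dom)
    qed
    also have "\<dots> \<le> (B + 1) * ((\<Sum>k\<in>I. norm (f (b k) - f (a k))) + (\<Sum>k\<in>I. norm (g (b k) - g (a k))))"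
      by (intro mult_right_mono add_nonneg_nonneg sum_nonneg) auto
    also have "\<dots> < (B + 1) * (\<eta> + \<eta>)"
      using \<delta>f[of I a b] \<delta>g[of I a b] I \<open>B \<ge> 0\<close> by (intro mult_strict_left_mono add_strict_mono) auto
    also have "\<dots> = (B + 1) * (\<epsilon> / (B + 1))"
      unfolding \<eta>_def by (simp only: field_sum_of_halves)
    also have "\<dots> = \<epsilon>"
      using \<open>B \<ge> 0\<close> by simp
    finally show "(\<Sum>k\<in>I. norm (h (b k) - h (a k))) < \<epsilon>" .
  qed (use \<open>\<delta>f > 0\<close> \<open>\<delta>g > 0\<close> in auto)
qed

lemma abs_continuous_on_add:
  fixes f g :: "real \<Rightarrow> 'a::real_normed_vector"
  assumes "abs_continuous_on S f" "abs_continuous_on S g"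
  shows "abs_continuous_on S (\<lambda>t. f t + g t)"
  by (rule abs_continuous_on_dominated[OF assms, of 1])
    (auto simp: add_diff_add intro: norm_triangle_ineq)

lemma abs_continuous_on_compose_lipschitz:
  fixes g :: "real \<Rightarrow> 'a::real_normed_vector" and h :: "'a \<Rightarrow> 'b::real_normed_vector"
  assumes "abs_continuous_on S g" "B-lipschitz_on (g ` S) h"
  shows "abs_continuous_on S (\<lambda>t. h (g t))"
proof (rule abs_continuous_on_dominated[OF assms(1) assms(1), of "B / 2"])
  show "B / 2 \<ge> 0" using lipschitz_on_nonneg[OF assms(2)] by simp
  fix x y assume "x \<in> S" "y \<in> S"
  then show "norm (h (g y) - h (g x)) \<le> B / 2 * (norm (g y - g x) + norm (g y - g x))"
    using lipschitz_on_normD[OF assms(2)] by simp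
qed

lemma abs_continuous_on_ident: "abs_continuous_on S (\<lambda>t. t)"
  unfolding abs_continuous_on_def
proof (intro allI impI exI[of _ \<epsilon> for \<epsilon>] conjI)
  fix \<epsilon> :: real and I :: "nat set" and a b
  assume "\<forall>k\<in>I. a k \<le> b k \<and> {a k..b k} \<subseteq> S" "(\<Sum>k\<in>I. b k - a k) < \<epsilon>"
  then show "(\<Sum>k\<in>I. norm (b k - a k)) < \<epsilon>" by (simp cong: sum.cong)
qed

lemma lipschitz_on_imp_abs_continuous_on:
  fixes g :: "real \<Rightarrow> 'a::real_normed_vector"
  assumes "B-lipschitz_on S g"
  shows "abs_continuous_on S g"
  using abs_continuous_on_compose_lipschitz[OF abs_continuous_on_ident, of B S g] assms by simp

lemma abs_continuous_on_scaleR: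
  fixes f :: "real \<Rightarrow> 'a::real_normed_vector"
  assumes "abs_continuous_on S f"
  shows "abs_continuous_on S (\<lambda>t. c *\<^sub>R f t)"
  using abs_continuous_on_compose_lipschitz[OF assms lipschitz_on_cmult[OF lipschitz_on_id]] by simp

lemma abs_continuous_on_diff:
  fixes f g :: "real \<Rightarrow> 'a::real_normed_vector"
  assumes "abs_continuous_on S f" "abs_continuous_on S g"
  shows "abs_continuous_on S (\<lambda>t. f t - g t)"
  using abs_continuous_on_add[OF assms(1) abs_continuous_on_scaleR[OF assms(2), of "-1"]] by simp

lemma abs_continuous_on_imp_continuous_on:
  fixes g :: "real \<Rightarrow> 'a::real_normed_vector"
  assumes "abs_continuous_on {a..b} g"
  shows "continuous_on {a..b} g"
  unfolding continuous_on_iff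
proof (intro ballI allI impI)
  fix x \<epsilon> :: real assume x: "x \<in> {a..b}" and "\<epsilon> > 0"
  obtain \<delta> where "\<delta> > 0" and \<delta>: "\<And>(P::unit set) lo hi. finite P \<Longrightarrow>
       (\<And>k. k \<in> P \<Longrightarrow> lo k \<le> hi k \<and> {lo k..hi k} \<subseteq> {a..b}) \<Longrightarrow>
       (\<And>k l. k \<in> P \<Longrightarrow> l \<in> P \<Longrightarrow> k \<noteq> l \<Longrightarrow> {lo k<..<hi k} \<inter> {lo l<..<hi l} = {}) \<Longrightarrow>
       (\<Sum>k\<in>P. hi k - lo k) < \<delta> \<Longrightarrow> (\<Sum>k\<in>P. norm (g (hi k) - g (lo k))) < \<epsilon>"
    by (rule abs_continuous_onE[where 'i=unit, OF assms \<open>\<epsilon> > 0\<close>]) blast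
  show "\<exists>\<delta>>0. \<forall>y\<in>{a..b}. dist y x < \<delta> \<longrightarrow> dist (g y) (g x) < \<epsilon>"
  proof (intro exI[of _ \<delta>] conjI ballI impI \<open>\<delta> > 0\<close>)
    fix y assume y: "y \<in> {a..b}" "dist y x < \<delta>"
    have "norm (g (max x y) - g (min x y)) < \<epsilon>"
      using \<delta>[of UNIV "\<lambda>_. min x y" "\<lambda>_. max x y"] x y by (auto simp: dist_real_def)
    then show "dist (g y) (g x) < \<epsilon>"
      by (cases "x \<le> y") (auto simp: dist_norm norm_minus_commute max_def min_def)
  qed
qed

lemma bounded_real_derivative_imp_lipschitz:
  fixes g :: "real \<Rightarrow> real"
  assumes "convex S" "\<And>x. x \<in> S \<Longrightarrow> (g has_real_derivative g' x) (at x within S)"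
    and "\<And>x. x \<in> S \<Longrightarrow> \<bar>g' x\<bar> \<le> B" "B \<ge> 0"
  shows "B-lipschitz_on S g"
proof (rule bounded_derivative_imp_lipschitz[of S g "\<lambda>x h. g' x * h"])
  fix x assume "x \<in> S"
  then show "(g has_derivative (\<lambda>h. g' x * h)) (at x within S)"
    using assms(2) by (simp add: has_field_derivative_def)
  show "onorm (\<lambda>h. g' x * h) \<le> B"
    using assms(3)[OF \<open>x \<in> S\<close>] by (intro onorm_le) (simp add: abs_mult mult_right_mono)
qed (use assms in auto)

lemma continuous_gradient_imp_lipschitz_on_cball:
  fixes F :: "'a::euclidean_space \<Rightarrow> real"
  assumes "\<And>x. GDERIV F x :> G x" "continuous_on UNIV G"
  obtains B where "B-lipschitz_on (cball 0 R) F"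
proof -
  have "compact (G ` cball 0 R)"
    using assms(2) by (intro compact_continuous_image) (auto intro: continuous_on_subset)
  then obtain B where "B > 0" and B: "\<And>x. x \<in> cball 0 R \<Longrightarrow> norm (G x) \<le> B"
    using compact_imp_bounded bounded_pos by (metis imageI)
  have "B-lipschitz_on (cball 0 R) F"
  proof (rule bounded_derivative_imp_lipschitz[of _ F "\<lambda>x h. h \<bullet> G x"])
    fix x :: 'a assume "x \<in> cball 0 R"
    show "(F has_derivative (\<lambda>h. h \<bullet> G x)) (at x within cball 0 R)"
      using assms(1) unfolding gderiv_def by (rule has_derivative_at_withinI)
    show "onorm (\<lambda>h. h \<bullet> G x) \<le> B"
    proof (rule onorm_le)
      fix h :: 'a
      have "norm (h \<bullet> G x) \<le> norm h * norm (G x)" by (simp add: Cauchy_Schwarz_ineq2)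
      also have "\<dots> \<le> B * norm h" using B[OF \<open>x \<in> cball 0 R\<close>] by (metis mult.commute mult_left_mono norm_ge_zero)
      finally show "norm (h \<bullet> G x) \<le> B * norm h" .
    qed
  qed (use \<open>B > 0\<close> in auto)
  then show thesis by (rule that)
qed

lemma abs_continuous_on_compose_gradient:
  fixes g :: "real \<Rightarrow> 'a::euclidean_space"
  assumes "abs_continuous_on {a..b} g" "\<And>x. GDERIV F x :> G x" "continuous_on UNIV G"
  shows "abs_continuous_on {a..b} (\<lambda>s. F (g s))"
proof -
  have "compact (g ` {a..b})"
    using abs_continuous_on_imp_continuous_on[OF assms(1)] by (rule compact_continuous_image) simp
  then obtain R where "g ` {a..b} \<subseteq> cball 0 R"
    using compact_imp_bounded bounded_iff by (metis mem_cball_0 subsetI)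
  obtain B where "B-lipschitz_on (cball 0 R) F"
    using continuous_gradient_imp_lipschitz_on_cball[OF assms(2,3)] .
  then show ?thesis
    by (rule abs_continuous_on_compose_lipschitz[OF assms(1) lipschitz_on_subset]) fact
qed

lemma abs_continuous_on_power2_norm:
  fixes V :: "real \<Rightarrow> 'a::euclidean_space"
  assumes "abs_continuous_on {a..b} V"
  shows "abs_continuous_on {a..b} (\<lambda>s. (norm (V s))\<^sup>2)"
proof (rule abs_continuous_on_compose_gradient[OF assms])
  fix x :: 'a
  show "GDERIV (\<lambda>x. (norm x)\<^sup>2) x :> 2 *\<^sub>R x"
    unfolding gderiv_def using has_derivative_sqnorm_at[of x] by (simp add: inner_commute)
qed (intro continuous_intros)

lemma abs_continuous_on_mult:
  fixes f g :: "real \<Rightarrow> real"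
  assumes "abs_continuous_on {a..b} f" "abs_continuous_on {a..b} g"
  shows "abs_continuous_on {a..b} (\<lambda>t. f t * g t)"
proof -
  \<comment> \<open>polarization: \<open>4 f g = (f + g)\<^sup>2 - (f - g)\<^sup>2\<close>\<close>
  have "abs_continuous_on {a..b}
      (\<lambda>t. (1/4) *\<^sub>R ((norm (f t + g t))\<^sup>2 - (norm (f t - g t))\<^sup>2))"
    using assms by (intro abs_continuous_on_scaleR abs_continuous_on_diff abs_continuous_on_add
        abs_continuous_on_power2_norm)
  moreover have "(1/4) *\<^sub>R ((norm (f t + g t))\<^sup>2 - (norm (f t - g t))\<^sup>2) = f t * g t" for t
    by (simp add: power2_eq_square algebra_simps)
  ultimately show ?thesis by simp
qed

lemma abs_continuous_on_integral:
  fixes \<phi> :: "real \<Rightarrow> real"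
  assumes "continuous_on {a..b} \<phi>"
  shows "abs_continuous_on {a..b} (\<lambda>s. integral {a..s} \<phi>)"
proof -
  have "compact (\<phi> ` {a..b})" using assms by (rule compact_continuous_image) simp
  then obtain M where "M > 0" and M: "\<And>x. x \<in> {a..b} \<Longrightarrow> \<bar>\<phi> x\<bar> \<le> M"
    using compact_imp_bounded bounded_pos by (metis imageI real_norm_def)
  have "M-lipschitz_on {a..b} (\<lambda>s. integral {a..s} \<phi>)"
    using integral_has_real_derivative[OF assms] M \<open>M > 0\<close>
    by (intro bounded_real_derivative_imp_lipschitz) auto
  then show ?thesis by (rule lipschitz_on_imp_abs_continuous_on)
qed

section \<open>Absolutely continuous functions with a.e. nonpositive derivative\<close>

lemma has_real_derivative_nonpos_straddle:
  fixes g :: "real \<Rightarrow> real"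
  assumes "(g has_real_derivative d) (at x within S)" "d \<le> 0" "\<epsilon> > 0"
  obtains r where "r > 0"
    "\<And>u v. u \<in> S \<Longrightarrow> v \<in> S \<Longrightarrow> u \<le> x \<Longrightarrow> x \<le> v \<Longrightarrow> x - u < r \<Longrightarrow> v - x < r \<Longrightarrow>
      g v - g u \<le> \<epsilon> * (v - u)"
proof -
  obtain r where "r > 0" and r: "\<And>y. y \<in> S \<Longrightarrow> \<bar>y - x\<bar> < r \<Longrightarrow>
      \<bar>g y - g x - d * (y - x)\<bar> \<le> \<epsilon> * \<bar>y - x\<bar>"
    using assms(1,3) unfolding has_field_derivative_def has_derivative_within_alt by fastforce
  show thesis
  proof (rule that[OF \<open>r > 0\<close>])
    fix u v assume uv: "u \<in> S" "v \<in> S" "u \<le> x" "x \<le> v" "x - u < r" "v - x < r"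
    have "\<bar>g v - g x - d * (v - x)\<bar> \<le> \<epsilon> * (v - x)" "\<bar>g u - g x - d * (u - x)\<bar> \<le> \<epsilon> * (x - u)"
      using r[of v] r[of u] uv by auto
    moreover have "d * (v - x) + d * (x - u) \<le> 0"
      using assms(2) uv(3,4) by (simp add: mult_nonpos_nonneg flip: distrib_left)
    moreover have "\<epsilon> * (v - u) = \<epsilon> * (v - x) + \<epsilon> * (x - u)" "d * (u - x) = - (d * (x - u))"
      by (simp_all add: algebra_simps)
    ultimately show "g v - g u \<le> \<epsilon> * (v - u)" unfolding abs_le_iff by linarith
  qed
qed

lemma tagged_division_of_real_intervalE:
  assumes "p tagged_division_of {a..b::real}" "(x, K) \<in> p"
  obtains u v where "K = {u..v}" "u \<le> v" "x \<in> {u..v}" "{u..v} \<subseteq> {a..b}"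
proof -
  obtain u v where "K = cbox u v" using tagged_division_ofD(4)[OF assms] by blast
  moreover have "x \<in> K" "K \<subseteq> {a..b}" using tagged_division_ofD(2,3)[OF assms] by auto
  ultimately show thesis using that[of u v] by auto
qed

lemma negligible_imp_small_open_superset:
  assumes "negligible N" "\<delta> > 0"
  obtains T where "open T" "N \<subseteq> T" "T \<in> lmeasurable" "measure lebesgue T < \<delta>"
proof -
  obtain T where T: "open T" "N \<subseteq> T" "T - N \<in> lmeasurable" "emeasure lebesgue (T - N) < ennreal \<delta>"
    using sets_lebesgue_outer_open[OF negligible_imp_sets[OF assms(1)] assms(2)] by blast
  have symd: "negligible (sym_diff (T - N) T)"
    by (rule negligible_subset[OF assms(1)]) auto
  have "T \<in> lmeasurable" using lmeasurable_negligible_symdiff[OF T(3) symd] .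
  moreover have "measure lebesgue T = measure lebesgue (T - N)"
    using measure_negligible_symdiff[OF T(3) symd] .
  moreover have "measure lebesgue (T - N) < \<delta>"
    using T(3,4) assms(2) by (simp add: emeasure_eq_measure2 ennreal_less_iff)
  ultimately show thesis using that T(1,2) by simp
qed

lemma tagged_partial_division_sum_measure_le:
  fixes p :: "('a::euclidean_space \<times> 'a set) set"
  assumes "p tagged_partial_division_of S" "\<And>x K. (x, K) \<in> p \<Longrightarrow> K \<subseteq> T" "T \<in> lmeasurable"
  shows "(\<Sum>(x, K)\<in>p. measure lebesgue K) \<le> measure lebesgue T"
proof -
  have p: "p tagged_division_of \<Union>(snd ` p)"
    using assms(1) unfolding tagged_division_of_def tagged_partial_division_of_def by force
  have "(\<Sum>(x, K)\<in>p. measure lebesgue K) = (\<Sum>K\<in>snd ` p. measure lebesgue K)"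
    by (rule sum.over_tagged_division_lemma[OF p]) (simp add: content_eq_0_interior)
  also have "\<dots> = measure lebesgue (\<Union>(snd ` p))"
    by (rule content_division[OF division_of_tagged_division[OF p]])
  also have "\<dots> \<le> measure lebesgue T"
  proof (rule measure_mono_fmeasurable)
    show "\<Union>(snd ` p) \<subseteq> T"
    proof
      fix y assume "y \<in> \<Union>(snd ` p)"
      then obtain x K where "(x, K) \<in> p" "y \<in> K" by auto
      then show "y \<in> T" using assms(2) by blast
    qed
    show "\<Union>(snd ` p) \<in> sets lebesgue"
      by (rule fmeasurableD[OF lmeasurable_division[OF division_of_tagged_division[OF p]]])
  qed (rule assms(3))
  finally show ?thesis .
qed

lemma abs_continuous_on_small_tagged_subdivision:
  fixes g :: "real \<Rightarrow> real"
  assumes "abs_continuous_on {a..b} g" "\<epsilon> > 0"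
  obtains \<delta> where "\<delta> > 0"
    "\<And>p q T. p tagged_division_of {a..b} \<Longrightarrow> q \<subseteq> p \<Longrightarrow> (\<And>x K. (x, K) \<in> q \<Longrightarrow> K \<subseteq> T) \<Longrightarrow>
      T \<in> lmeasurable \<Longrightarrow> measure lebesgue T < \<delta> \<Longrightarrow> (\<Sum>(x, K)\<in>q. g (Sup K) - g (Inf K)) < \<epsilon>"
proof -
  obtain \<delta> where "\<delta> > 0" and \<delta>: "\<And>(P::(real \<times> real set) set) lo hi. finite P \<Longrightarrow>
       (\<And>k. k \<in> P \<Longrightarrow> lo k \<le> hi k \<and> {lo k..hi k} \<subseteq> {a..b}) \<Longrightarrow>
       (\<And>k l. k \<in> P \<Longrightarrow> l \<in> P \<Longrightarrow> k \<noteq> l \<Longrightarrow> {lo k<..<hi k} \<inter> {lo l<..<hi l} = {}) \<Longrightarrow>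
       (\<Sum>k\<in>P. hi k - lo k) < \<delta> \<Longrightarrow> (\<Sum>k\<in>P. norm (g (hi k) - g (lo k))) < \<epsilon>"
    by (rule abs_continuous_onE[where 'i="real \<times> real set", OF assms]) blast
  show thesis
  proof (rule that[OF \<open>\<delta> > 0\<close>])
    fix p q T
    assume p: "p tagged_division_of {a..b}" and "q \<subseteq> p" and qT: "\<And>x K. (x, K) \<in> q \<Longrightarrow> K \<subseteq> T"
      and T: "T \<in> lmeasurable" "measure lebesgue T < \<delta>"
    have q: "q tagged_partial_division_of {a..b}"
      using p \<open>q \<subseteq> p\<close> unfolding tagged_division_of_def by (blast intro: tagged_partial_division_subset)
    have ivl: "\<exists>u v. snd k = {u..v} \<and> u \<le> v \<and> {u..v} \<subseteq> {a..b}" if "k \<in> q" for k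
    proof -
      have "(fst k, snd k) \<in> p" using that \<open>q \<subseteq> p\<close> by auto
      then show ?thesis by (rule tagged_division_of_real_intervalE[OF p]) blast
    qed
    have "(\<Sum>k\<in>q. Sup (snd k) - Inf (snd k)) = (\<Sum>(x, K)\<in>q. measure lebesgue K)"
      unfolding split_def
    proof (rule sum.cong[OF refl])
      fix k assume "k \<in> q"
      then obtain u v where "snd k = {u..v}" "u \<le> v" using ivl by blast
      then show "Sup (snd k) - Inf (snd k) = measure lebesgue (snd k)" by simp
    qed
    also have "\<dots> \<le> measure lebesgue T"
      by (rule tagged_partial_division_sum_measure_le[OF q qT T(1)])
    finally have lengths: "(\<Sum>k\<in>q. Sup (snd k) - Inf (snd k)) < \<delta>" using T(2) by linarith
    have "(\<Sum>k\<in>q. norm (g (Sup (snd k)) - g (Inf (snd k)))) < \<epsilon>"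
    proof (rule \<delta>[OF _ _ _ lengths])
      show "finite q" using q by (rule tagged_partial_division_ofD(1))
      show "Inf (snd k) \<le> Sup (snd k) \<and> {Inf (snd k)..Sup (snd k)} \<subseteq> {a..b}" if "k \<in> q" for k
        using ivl[OF that] by auto
      show "{Inf (snd k)<..<Sup (snd k)} \<inter> {Inf (snd l)<..<Sup (snd l)} = {}"
        if "k \<in> q" "l \<in> q" "k \<noteq> l" for k l
        using tagged_partial_division_ofD(5)[OF q, of "fst k" "snd k" "fst l" "snd l"] that ivl[of k] ivl[of l]
        by (auto simp: prod_eq_iff)
    qed
    moreover have "(\<Sum>(x, K)\<in>q. g (Sup K) - g (Inf K)) \<le> (\<Sum>k\<in>q. norm (g (Sup (snd k)) - g (Inf (snd k))))"
      unfolding split_def by (intro sum_mono) simp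
    ultimately show "(\<Sum>(x, K)\<in>q. g (Sup K) - g (Inf K)) < \<epsilon>" by linarith
  qed
qed

lemma DERIV_nonpos_ae_gauge:
  fixes g :: "real \<Rightarrow> real"
  assumes deriv: "\<And>x. x \<in> {a..b} - N \<Longrightarrow> \<exists>d. (g has_real_derivative d) (at x within {a..b}) \<and> d \<le> 0"
    and "open T" "N \<subseteq> T" "\<epsilon> > 0"
  obtains r where "\<And>x. r x > 0" "\<And>x. x \<in> N \<Longrightarrow> ball x (r x) \<subseteq> T"
    "\<And>x u v. x \<in> {a..b} - N \<Longrightarrow> u \<in> {a..b} \<Longrightarrow> v \<in> {a..b} \<Longrightarrow> u \<le> x \<Longrightarrow> x \<le> v \<Longrightarrow>
      x - u < r x \<Longrightarrow> v - x < r x \<Longrightarrow> g v - g u \<le> \<epsilon> * (v - u)"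
proof -
  have "\<forall>x. \<exists>r>0. (x \<in> N \<longrightarrow> ball x r \<subseteq> T) \<and> (x \<in> {a..b} - N \<longrightarrow> (\<forall>u\<in>{a..b}. \<forall>v\<in>{a..b}.
      u \<le> x \<longrightarrow> x \<le> v \<longrightarrow> x - u < r \<longrightarrow> v - x < r \<longrightarrow> g v - g u \<le> \<epsilon> * (v - u)))"
  proof
    fix x
    show "\<exists>r>0. (x \<in> N \<longrightarrow> ball x r \<subseteq> T) \<and> (x \<in> {a..b} - N \<longrightarrow> (\<forall>u\<in>{a..b}. \<forall>v\<in>{a..b}.
      u \<le> x \<longrightarrow> x \<le> v \<longrightarrow> x - u < r \<longrightarrow> v - x < r \<longrightarrow> g v - g u \<le> \<epsilon> * (v - u)))"
    proof (cases "x \<in> {a..b} - N")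
      case True
      then obtain d where "(g has_real_derivative d) (at x within {a..b})" "d \<le> 0"
        using deriv by blast
      from has_real_derivative_nonpos_straddle[OF this \<open>\<epsilon> > 0\<close>] obtain r where "r > 0"
        "\<And>u v. u \<in> {a..b} \<Longrightarrow> v \<in> {a..b} \<Longrightarrow> u \<le> x \<Longrightarrow> x \<le> v \<Longrightarrow> x - u < r \<Longrightarrow> v - x < r \<Longrightarrow>
          g v - g u \<le> \<epsilon> * (v - u)" by blast
      then show ?thesis using True by blast
    next
      case False
      have "\<exists>r>0. x \<in> N \<longrightarrow> ball x r \<subseteq> T"
        using \<open>open T\<close> \<open>N \<subseteq> T\<close> by (cases "x \<in> N") (auto simp: open_contains_ball intro: zero_less_one)
      then show ?thesis using False by blast
    qed
  qed
  from choice[OF this] obtain r where "\<forall>x. r x > 0 \<and> (x \<in> N \<longrightarrow> ball x (r x) \<subseteq> T) \<and>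
      (x \<in> {a..b} - N \<longrightarrow> (\<forall>u\<in>{a..b}. \<forall>v\<in>{a..b}.
      u \<le> x \<longrightarrow> x \<le> v \<longrightarrow> x - u < r x \<longrightarrow> v - x < r x \<longrightarrow> g v - g u \<le> \<epsilon> * (v - u)))"
    by blast
  then show thesis by (intro that[of r]) blast+
qed

lemma fine_tagged_division_sum_increments_le:
  fixes g :: "real \<Rightarrow> real"
  assumes "a \<le> b" "\<epsilon> \<ge> 0" and p: "p tagged_division_of {a..b}" and fine: "(\<lambda>x. ball x (r x)) fine p"
    and straddle: "\<And>x u v. x \<in> {a..b} - N \<Longrightarrow> u \<in> {a..b} \<Longrightarrow> v \<in> {a..b} \<Longrightarrow> u \<le> x \<Longrightarrow> x \<le> v \<Longrightarrow>
      x - u < r x \<Longrightarrow> v - x < r x \<Longrightarrow> g v - g u \<le> \<epsilon> * (v - u)"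
  shows "(\<Sum>(x, K)\<in>p - N \<times> UNIV. g (Sup K) - g (Inf K)) \<le> \<epsilon> * (b - a)"
proof -
  have "(\<Sum>(x, K)\<in>p - N \<times> UNIV. g (Sup K) - g (Inf K)) \<le> (\<Sum>(x, K)\<in>p - N \<times> UNIV. \<epsilon> * (Sup K - Inf K))"
  proof (rule sum_mono)
    fix xK assume "xK \<in> p - N \<times> UNIV"
    then obtain x K where xK: "xK = (x, K)" "(x, K) \<in> p" "x \<notin> N" by (cases xK) auto
    obtain u v where K: "K = {u..v}" "u \<le> v" "x \<in> {u..v}" "{u..v} \<subseteq> {a..b}"
      by (rule tagged_division_of_real_intervalE[OF p xK(2)])
    have "u \<in> ball x (r x)" "v \<in> ball x (r x)"
      using fineD[OF fine xK(2)] K(1,2) by auto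
    then have "x - u < r x" "v - x < r x"
      using K(3) by (auto simp: dist_real_def)
    then show "(\<lambda>(x, K). g (Sup K) - g (Inf K)) xK \<le> (\<lambda>(x, K). \<epsilon> * (Sup K - Inf K)) xK"
      using straddle[of x u v] K xK by auto
  qed
  also have "\<dots> \<le> (\<Sum>(x, K)\<in>p. \<epsilon> * (Sup K - Inf K))"
  proof (rule sum_mono2[OF tagged_division_of_finite[OF p]])
    fix xK assume "xK \<in> p - (p - N \<times> UNIV)"
    then obtain x K where xK: "xK = (x, K)" "(x, K) \<in> p" by (cases xK) auto
    obtain u v where "K = {u..v}" "u \<le> v"
      by (rule tagged_division_of_real_intervalE[OF p xK(2)])
    then show "0 \<le> (\<lambda>(x, K). \<epsilon> * (Sup K - Inf K)) xK" using \<open>\<epsilon> \<ge> 0\<close> xK by simp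
  qed auto
  also have "\<dots> = \<epsilon> * (b - a)"
    using additive_tagged_division_1[OF \<open>a \<le> b\<close> p, of "\<lambda>t. t"]
    by (simp add: case_prod_unfold flip: sum_distrib_left)
  finally show ?thesis .
qed

lemma abs_continuous_on_DERIV_nonpos_imp_le:
  fixes g :: "real \<Rightarrow> real"
  assumes "a \<le> b" "abs_continuous_on {a..b} g" "negligible N"
    and deriv: "\<And>x. x \<in> {a..b} - N \<Longrightarrow> \<exists>d. (g has_real_derivative d) (at x within {a..b}) \<and> d \<le> 0"
  shows "g b \<le> g a"
proof (rule field_le_epsilon)
  fix e :: real assume "e > 0"
  define \<epsilon> where "\<epsilon> = e / (1 + (b - a))"
  have "\<epsilon> > 0" using \<open>e > 0\<close> \<open>a \<le> b\<close> by (simp add: \<epsilon>_def)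
  obtain \<delta> where "\<delta> > 0" and small: "\<And>p q T. p tagged_division_of {a..b} \<Longrightarrow> q \<subseteq> p \<Longrightarrow>
      (\<And>x K. (x, K) \<in> q \<Longrightarrow> K \<subseteq> T) \<Longrightarrow> T \<in> lmeasurable \<Longrightarrow> measure lebesgue T < \<delta> \<Longrightarrow>
      (\<Sum>(x, K)\<in>q. g (Sup K) - g (Inf K)) < \<epsilon>"
    by (rule abs_continuous_on_small_tagged_subdivision[OF assms(2) \<open>\<epsilon> > 0\<close>]) blast
  obtain T where T: "open T" "N \<subseteq> T" "T \<in> lmeasurable" "measure lebesgue T < \<delta>"
    using negligible_imp_small_open_superset[OF assms(3) \<open>\<delta> > 0\<close>] by blast
  obtain r where r: "\<And>x. r x > 0" and rN: "\<And>x. x \<in> N \<Longrightarrow> ball x (r x) \<subseteq> T"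
    and straddle: "\<And>x u v. x \<in> {a..b} - N \<Longrightarrow> u \<in> {a..b} \<Longrightarrow> v \<in> {a..b} \<Longrightarrow> u \<le> x \<Longrightarrow> x \<le> v \<Longrightarrow>
      x - u < r x \<Longrightarrow> v - x < r x \<Longrightarrow> g v - g u \<le> \<epsilon> * (v - u)"
    using DERIV_nonpos_ae_gauge[OF deriv T(1,2) \<open>\<epsilon> > 0\<close>] by metis
  obtain p where p: "p tagged_division_of {a..b}" and fine: "(\<lambda>x. ball x (r x)) fine p"
    using fine_division_exists_real[OF gauge_ball_dependent] r by blast
  \<comment> \<open>The intervals tagged in \<open>N\<close> lie in \<open>T\<close>, which is small, so absolute continuity
    controls their increments; on the others the derivative does.\<close>
  let ?inc = "\<lambda>(x, K). g (Sup K) - g (Inf K)"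
  have "g b - g a = sum ?inc p"
    using additive_tagged_division_1[OF \<open>a \<le> b\<close> p, of g] by simp
  also have "\<dots> = sum ?inc (p \<inter> N \<times> UNIV) + sum ?inc (p - N \<times> UNIV)"
    by (rule sum.Int_Diff[OF tagged_division_of_finite[OF p]])
  also have "\<dots> \<le> \<epsilon> + \<epsilon> * (b - a)"
  proof (rule add_mono)
    have "K \<subseteq> T" if "(x, K) \<in> p \<inter> N \<times> UNIV" for x K
      using fineD[OF fine] rN that by blast
    then have "sum ?inc (p \<inter> N \<times> UNIV) < \<epsilon>"
      by (intro small[OF p _ _ T(3,4)]) auto
    then show "sum ?inc (p \<inter> N \<times> UNIV) \<le> \<epsilon>" by simp
    show "sum ?inc (p - N \<times> UNIV) \<le> \<epsilon> * (b - a)"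
      using \<open>\<epsilon> > 0\<close> by (intro fine_tagged_division_sum_increments_le[OF \<open>a \<le> b\<close> _ p fine straddle]) auto
  qed
  also have "\<dots> = \<epsilon> * (1 + (b - a))"
    by (simp add: algebra_simps)
  also have "\<dots> = e"
    using \<open>a \<le> b\<close> by (simp add: \<epsilon>_def)
  finally show "g b \<le> g a + e" by simp
qed

section \<open>The Lyapunov function\<close>

definition lyapunov_energy ::
    "('a::real_normed_vector \<Rightarrow> real) \<Rightarrow> real \<Rightarrow> (real \<Rightarrow> real) \<Rightarrow> (real \<Rightarrow> 'a) \<Rightarrow> (real \<Rightarrow> 'a) \<Rightarrow> real \<Rightarrow> real"
  where "lyapunov_energy F \<mu> \<gamma> X V s =
    F (X s) + \<gamma> s / 2 * (norm (V s))\<^sup>2 + 1/2 * integral {0..s} (\<lambda>r. (\<mu> + 3 * \<gamma> r) * (norm (V r))\<^sup>2)"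

lemma abs_continuous_on_lyapunov_energy:
  fixes X V :: "real \<Rightarrow> 'a::euclidean_space"
  assumes "\<And>x. GDERIV F x :> G x" "continuous_on UNIV G"
    and "abs_continuous_on {0..t} X" "abs_continuous_on {0..t} V"
    and \<gamma>: "\<gamma> = (\<lambda>s. \<mu> + (\<gamma>0 - \<mu>) * exp (- s))"
  shows "abs_continuous_on {0..t} (lyapunov_energy F \<mu> \<gamma> X V)"
proof -
  have "(\<bar>\<gamma>0 - \<mu>\<bar> / 2)-lipschitz_on {0..t} (\<lambda>s. \<gamma> s / 2)"
  proof (rule bounded_real_derivative_imp_lipschitz)
    fix s :: real assume "s \<in> {0..t}"
    show "((\<lambda>s. \<gamma> s / 2) has_real_derivative (\<mu> - \<gamma> s) / 2) (at s within {0..t})"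
      unfolding \<gamma> by (auto intro!: derivative_eq_intros)
    have "\<bar>\<gamma>0 - \<mu>\<bar> * exp (- s) \<le> \<bar>\<gamma>0 - \<mu>\<bar>"
      using \<open>s \<in> {0..t}\<close> by (simp add: mult_left_le)
    then show "\<bar>(\<mu> - \<gamma> s) / 2\<bar> \<le> \<bar>\<gamma>0 - \<mu>\<bar> / 2"
      unfolding \<gamma> by (simp add: abs_mult)
  qed auto
  then have ac\<gamma>: "abs_continuous_on {0..t} (\<lambda>s. \<gamma> s / 2)"
    by (rule lipschitz_on_imp_abs_continuous_on)
  have "continuous_on {0..t} (\<lambda>r. (\<mu> + 3 * \<gamma> r) * (norm (V r))\<^sup>2)"
    unfolding \<gamma> using abs_continuous_on_imp_continuous_on[OF assms(4)] by (intro continuous_intros)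
  from abs_continuous_on_scaleR[OF abs_continuous_on_integral[OF this], of "1/2"]
  have "abs_continuous_on {0..t} (\<lambda>s. 1/2 * integral {0..s} (\<lambda>r. (\<mu> + 3 * \<gamma> r) * (norm (V r))\<^sup>2))"
    by simp
  then show ?thesis
    unfolding lyapunov_energy_def[abs_def]
    by (intro abs_continuous_on_add abs_continuous_on_compose_gradient[OF assms(3,1,2)]
        abs_continuous_on_mult[OF ac\<gamma>] abs_continuous_on_power2_norm[OF assms(4)])
qed

lemma lyapunov_energy_has_derivative:
  fixes X V :: "real \<Rightarrow> 'a::euclidean_space"
  assumes F: "GDERIV F (X s) :> G"
    and X': "(X has_vector_derivative V s) (at s)" and V': "(V has_vector_derivative V') (at s)"
    and \<gamma>: "\<gamma> = (\<lambda>s. \<mu> + (\<gamma>0 - \<mu>) * exp (- s))"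
    and "continuous_on {0..t} V" "s \<in> {0..t}"
  shows "(lyapunov_energy F \<mu> \<gamma> X V has_real_derivative
      V s \<bullet> (G + \<gamma> s *\<^sub>R V' + (\<mu> + \<gamma> s) *\<^sub>R V s)) (at s within {0..t})"
proof -
  have dF: "((\<lambda>s. F (X s)) has_real_derivative V s \<bullet> G) (at s)"
    by (rule has_derivative_imp_has_field_derivative[OF
        has_derivative_compose[OF X'[unfolded has_vector_derivative_def] F[unfolded gderiv_def]]])
      (simp add: inner_commute)
  have d\<gamma>: "((\<lambda>s. \<gamma> s / 2) has_real_derivative (\<mu> - \<gamma> s) / 2) (at s)"
    unfolding \<gamma> by (auto intro!: derivative_eq_intros)
  have dV: "((\<lambda>s. (norm (V s))\<^sup>2) has_real_derivative 2 * (V s \<bullet> V')) (at s)"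
    by (rule has_derivative_imp_has_field_derivative[OF
        has_derivative_compose[OF V'[unfolded has_vector_derivative_def] has_derivative_sqnorm_at]])
      (simp add: inner_commute)
  have "continuous_on {0..t} (\<lambda>r. (\<mu> + 3 * \<gamma> r) * (norm (V r))\<^sup>2)"
    unfolding \<gamma> using assms(5) by (intro continuous_intros)
  note dI = integral_has_real_derivative[OF this \<open>s \<in> {0..t}\<close>]
  have "(lyapunov_energy F \<mu> \<gamma> X V has_real_derivative
      V s \<bullet> G + ((\<mu> - \<gamma> s) / 2 * (norm (V s))\<^sup>2 + 2 * (V s \<bullet> V') * (\<gamma> s / 2))
        + 1/2 * ((\<mu> + 3 * \<gamma> s) * (norm (V s))\<^sup>2)) (at s within {0..t})"
    unfolding lyapunov_energy_def[abs_def]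
    by (intro DERIV_add DERIV_mult DERIV_cmult dI has_field_derivative_at_within[OF dF]
        has_field_derivative_at_within[OF d\<gamma>] has_field_derivative_at_within[OF dV])
  moreover have "V s \<bullet> G + ((\<mu> - \<gamma> s) / 2 * (norm (V s))\<^sup>2 + 2 * (V s \<bullet> V') * (\<gamma> s / 2))
        + 1/2 * ((\<mu> + 3 * \<gamma> s) * (norm (V s))\<^sup>2) = V s \<bullet> (G + \<gamma> s *\<^sub>R V' + (\<mu> + \<gamma> s) *\<^sub>R V s)"
    by (simp add: inner_add_right power2_norm_eq_inner field_simps)
  ultimately show ?thesis by simp
qed

lemma lyapunov_energy_DERIV_nonpos:
  fixes X Z :: "real \<Rightarrow> 'a::euclidean_space"
  assumes "GDERIV F (X s) :> G" "G \<in> C"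
    and "(X has_vector_derivative (Z s - X s)) (at s)" "(Z has_vector_derivative Z') (at s)"
    and flow: "\<gamma> s *\<^sub>R Z' = \<mu> *\<^sub>R (X s - Z s) - v" and v: "v \<in> argmin_inner (X s - Z s) C"
    and "\<gamma> = (\<lambda>s. \<mu> + (\<gamma>0 - \<mu>) * exp (- s))"
    and "continuous_on {0..t} (\<lambda>s. Z s - X s)" "s \<in> {0..t}"
  shows "\<exists>d. (lyapunov_energy F \<mu> \<gamma> X (\<lambda>s. Z s - X s) has_real_derivative d) (at s within {0..t}) \<and> d \<le> 0"
proof (intro exI conjI)
  have "((\<lambda>s. Z s - X s) has_vector_derivative Z' - (Z s - X s)) (at s)"
    by (rule has_vector_derivative_diff[OF assms(4,3)])
  from lyapunov_energy_has_derivative[OF assms(1,3) this assms(7-9)]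
  show "(lyapunov_energy F \<mu> \<gamma> X (\<lambda>s. Z s - X s) has_real_derivative
      (Z s - X s) \<bullet> (G + \<gamma> s *\<^sub>R (Z' - (Z s - X s)) + (\<mu> + \<gamma> s) *\<^sub>R (Z s - X s))) (at s within {0..t})" .
  have eq: "G + \<gamma> s *\<^sub>R (Z' - (Z s - X s)) + (\<mu> + \<gamma> s) *\<^sub>R (Z s - X s) = G - v"
    using flow by (simp add: algebra_simps)
  have "(X s - Z s) \<bullet> v \<le> (X s - Z s) \<bullet> G"
    using v \<open>G \<in> C\<close> unfolding argmin_inner_def by blast
  then show "(Z s - X s) \<bullet> (G + \<gamma> s *\<^sub>R (Z' - (Z s - X s)) + (\<mu> + \<gamma> s) *\<^sub>R (Z s - X s)) \<le> 0"
    unfolding eq by (simp add: inner_diff_left inner_diff_right)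
qed

lemma lyapunov_energy_nonincreasing:
  fixes X Z :: "real \<Rightarrow> 'a::euclidean_space"
  assumes "\<And>x. GDERIV F x :> G x" "continuous_on UNIV G"
    and X: "abs_continuous_on {0..t} X" and Z: "abs_continuous_on {0..t} Z"
    and \<gamma>: "\<gamma> = (\<lambda>s. \<mu> + (\<gamma>0 - \<mu>) * exp (- s))" and "t \<ge> 0" "negligible N"
    and grad_in: "\<And>s. G (X s) \<in> C s"
    and flow: "\<And>s. s \<in> {0..t} - N \<Longrightarrow> (X has_vector_derivative (Z s - X s)) (at s) \<and>
      (\<exists>Z'. (Z has_vector_derivative Z') (at s) \<and>
        \<gamma> s *\<^sub>R Z' \<in> (\<lambda>v. \<mu> *\<^sub>R (X s - Z s) - v) ` argmin_inner (X s - Z s) (C s))"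
  shows "lyapunov_energy F \<mu> \<gamma> X (\<lambda>s. Z s - X s) t \<le> lyapunov_energy F \<mu> \<gamma> X (\<lambda>s. Z s - X s) 0"
proof (rule abs_continuous_on_DERIV_nonpos_imp_le[where a = 0 and b = t and N = N])
  have V: "abs_continuous_on {0..t} (\<lambda>s. Z s - X s)" by (rule abs_continuous_on_diff[OF Z X])
  show "abs_continuous_on {0..t} (lyapunov_energy F \<mu> \<gamma> X (\<lambda>s. Z s - X s))"
    by (rule abs_continuous_on_lyapunov_energy[OF assms(1,2) X V \<gamma>])
  fix s assume s: "s \<in> {0..t} - N"
  then obtain Z' v where "(X has_vector_derivative (Z s - X s)) (at s)" "(Z has_vector_derivative Z') (at s)"
    "\<gamma> s *\<^sub>R Z' = \<mu> *\<^sub>R (X s - Z s) - v" "v \<in> argmin_inner (X s - Z s) (C s)"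
    using flow by blast
  from lyapunov_energy_DERIV_nonpos[OF assms(1) grad_in this \<gamma>
      abs_continuous_on_imp_continuous_on[OF V]] s
  show "\<exists>d. (lyapunov_energy F \<mu> \<gamma> X (\<lambda>s. Z s - X s) has_real_derivative d) (at s within {0..t}) \<and> d \<le> 0"
    by blast
qed (use assms(6,7) in auto)

theorem mainTheorem7:
  fixes m :: nat
    and f :: "nat \<Rightarrow> 'a::euclidean_space \<Rightarrow> real"
    and gradf :: "nat \<Rightarrow> 'a \<Rightarrow> 'a"
    and L \<mu>s :: "nat \<Rightarrow> real"
    and \<mu> \<gamma>0 :: real
    and x0 x1 :: 'a
    and \<gamma> :: "real \<Rightarrow> real"
    and X Z :: "real \<Rightarrow> 'a"
  assumes grad: "\<And>j x. j \<in> {1..m} \<Longrightarrow> GDERIV (f j) x :> gradf j x"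
    and grad_cont: "\<And>j. j \<in> {1..m} \<Longrightarrow> continuous_on UNIV (gradf j)"
    and grad_lip: "\<And>j. j \<in> {1..m} \<Longrightarrow> (L j)-lipschitz_on UNIV (gradf j)"
    and sconv: "\<And>j. j \<in> {1..m} \<Longrightarrow> strongly_convex_grad (\<mu>s j) (f j) (gradf j)"
    and mu_bounds: "\<And>j. j \<in> {1..m} \<Longrightarrow> 0 \<le> \<mu>s j \<and> \<mu>s j \<le> L j"
    and mu_def: "\<mu> = Min (\<mu>s ` {1..m})"
    and gamma0_pos: "\<gamma>0 > 0"
    and gamma_def: "\<And>t. \<gamma> t = \<mu> + (\<gamma>0 - \<mu>) * exp (- t)"
    and X_ac: "loc_abs_continuous_nonneg X"
    and Z_ac: "loc_abs_continuous_nonneg Z"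
    and X0: "X 0 = x0"
    and Z0: "Z 0 = x0 + x1"
    and ode: "AE t in lborel. t > 0 \<longrightarrow>
               (X has_vector_derivative (Z t - X t)) (at t) \<and>
               (\<exists>Z'. (Z has_vector_derivative Z') (at t) \<and>
                  \<gamma> t *\<^sub>R Z' \<in> (\<lambda>v. \<mu> *\<^sub>R (X t - Z t) - v) `
                     argmin_inner (X t - Z t) (convex hull ((\<lambda>j. gradf j (X t)) ` {1..m})))"
  shows "\<forall>j\<in>{1..m}. \<forall>t>0.
           f j (X t) + \<gamma> t / 2 * (norm (Z t - X t))\<^sup>2
             + 1/2 * integral {0..t} (\<lambda>s. (\<mu> + 3 * \<gamma> s) * (norm (Z s - X s))\<^sup>2)
           \<le> f j x0 + \<gamma>0 / 2 * (norm x1)\<^sup>2"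
proof (intro ballI allI impI)
  fix j and t :: real
  assume "j \<in> {1..m}" "t > 0"
  obtain N where flow: "\<And>s. s \<in> space lborel - N \<Longrightarrow> (s > 0 \<longrightarrow>
      (X has_vector_derivative (Z s - X s)) (at s) \<and>
      (\<exists>Z'. (Z has_vector_derivative Z') (at s) \<and>
        \<gamma> s *\<^sub>R Z' \<in> (\<lambda>v. \<mu> *\<^sub>R (X s - Z s) - v) `
          argmin_inner (X s - Z s) (convex hull ((\<lambda>j. gradf j (X s)) ` {1..m}))))"
    and "N \<in> null_sets lborel"
    using AE_E3[OF ode] by blast
  have "lyapunov_energy (f j) \<mu> \<gamma> X (\<lambda>s. Z s - X s) t \<le> lyapunov_energy (f j) \<mu> \<gamma> X (\<lambda>s. Z s - X s) 0"
  proof (rule lyapunov_energy_nonincreasing[where N = "N \<union> {0}"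
        and C = "\<lambda>s. convex hull ((\<lambda>j. gradf j (X s)) ` {1..m})"])
    show "abs_continuous_on {0..t} X" "abs_continuous_on {0..t} Z"
      using X_ac Z_ac \<open>t > 0\<close> unfolding loc_abs_continuous_nonneg_def by auto
    show "\<gamma> = (\<lambda>s. \<mu> + (\<gamma>0 - \<mu>) * exp (- s))" using gamma_def by (intro ext)
    show "negligible (N \<union> {0})"
      using \<open>N \<in> null_sets lborel\<close> by (simp add: negligible_iff_null_sets null_sets_completionI)
    show "gradf j (X s) \<in> convex hull ((\<lambda>j. gradf j (X s)) ` {1..m})" for s
      using \<open>j \<in> {1..m}\<close> by (simp add: hull_inc)
  qed (use flow grad grad_cont \<open>j \<in> {1..m}\<close> \<open>t > 0\<close> in auto)
  then show "f j (X t) + \<gamma> t / 2 * (norm (Z t - X t))\<^sup>2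
      + 1/2 * integral {0..t} (\<lambda>s. (\<mu> + 3 * \<gamma> s) * (norm (Z s - X s))\<^sup>2)
    \<le> f j x0 + \<gamma>0 / 2 * (norm x1)\<^sup>2"
    using X0 Z0 gamma_def[of 0] by (simp add: lyapunov_energy_def)
qed

end
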